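(* For any $t\in \mathbb{T}_n$ let $\hat{t}$ be its $(n\times n)$-matrix format, and let $J_n$ denote the $(n\times n)$ exchange matrix (the matrix whose entries are $1$ on the antidiagonal and $0$ everywhere else). Then $\hat{t}\, J_n$ is an uncurling metric of $\mathbb{T}_n$. Conversely, each member of the anti-rotor associated with $\mathbb{T}_n$ can be expressed as $\hat{t}\, J_n$ for some $t\in \mathbb{T}_n$.
   Context: An algebra means a real unital associative algebra with vector space of elements $\mathbb{R}^n$ (standard topology, standard basis, elements as column vectors). $\mathbb{T}_n$ is the $n$-dimensional algebra (under the usual matrix product) of real upper triangular Toeplitz $(n\times n)$-matrices; $s=(x_1,\dots,x_n)\in\mathbb{T}_n$ denotes the upper triangular Toeplitz matrix whose successive diagonals, starting with the main diagonal and moving right, have the constant values $x_1,\dots,x_n$. For an $n$-dimensional algebra $A$ with elements $s=(x_1,\dots,x_n)$ in an open ball of units centered at the identity $\mathbf{1}_A$, an uncurling metric is a real symmetric $(n\times n)$-matrix $L$ with $d\big((s^{-1})^T L\, \mathbf{d}s\big)=0$ on that ball, where $\mathbf{d}s=(dx_1,\dots,dx_n)^T$ and $d$ is the exterior derivative; the anti-rotor of $A$ is the real vector space of all uncurling metrics. *)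

theory Defs
  imports "HOL-Analysis.Analysis"
begin

text \<open>Elements of R^n are represented as functions nat => real supported on
  the index set {0..<n}; index i corresponds to the paper's coordinate x_(i+1).
  (n x n)-matrices are functions nat => nat => real, of which only entries with
  indices below n are meaningful.\<close>

definition supp_n :: "nat \<Rightarrow> (nat \<Rightarrow> real) \<Rightarrow> bool" where
  "supp_n n x \<longleftrightarrow> (\<forall>i\<ge>n. x i = 0)"

definition mat_mult :: "nat \<Rightarrow> (nat \<Rightarrow> nat \<Rightarrow> real) \<Rightarrow> (nat \<Rightarrow> nat \<Rightarrow> real) \<Rightarrow> (nat \<Rightarrow> nat \<Rightarrow> real)" where
  "mat_mult n A B = (\<lambda>i j. \<Sum>k<n. A i k * B k j)"

text \<open>Matrix format of s = (x_1,...,x_n) in T_n: upper triangular Toeplitz matrix whose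
  k-th diagonal (k = 0 main) has constant value x_(k+1).\<close>
definition toep :: "nat \<Rightarrow> (nat \<Rightarrow> real) \<Rightarrow> (nat \<Rightarrow> nat \<Rightarrow> real)" where
  "toep n x = (\<lambda>i j. if i \<le> j \<and> j < n then x (j - i) else 0)"

definition exch :: "nat \<Rightarrow> (nat \<Rightarrow> nat \<Rightarrow> real)" where
  "exch n = (\<lambda>i j. if i < n \<and> j < n \<and> i + j = n - 1 then 1 else 0)"

text \<open>The algebra T_n on R^n: product of upper triangular Toeplitz matrices; the product
  of toep s and toep t is toep of the vector below.\<close>
definition Tmul :: "nat \<Rightarrow> (nat \<Rightarrow> real) \<Rightarrow> (nat \<Rightarrow> real) \<Rightarrow> (nat \<Rightarrow> real)" where
  "Tmul n x y = (\<lambda>k. if k < n then (\<Sum>i\<le>k. x i * y (k - i)) else 0)"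

definition Tone :: "nat \<Rightarrow> (nat \<Rightarrow> real)" where
  "Tone n = (\<lambda>k. if k = 0 \<and> 0 < n then 1 else 0)"

definition alg_unit :: "nat \<Rightarrow> ((nat \<Rightarrow> real) \<Rightarrow> (nat \<Rightarrow> real) \<Rightarrow> (nat \<Rightarrow> real)) \<Rightarrow> (nat \<Rightarrow> real) \<Rightarrow> (nat \<Rightarrow> real) \<Rightarrow> bool" where
  "alg_unit n mul one x \<longleftrightarrow> (\<exists>y. supp_n n y \<and> mul x y = one \<and> mul y x = one)"

definition alg_inv :: "nat \<Rightarrow> ((nat \<Rightarrow> real) \<Rightarrow> (nat \<Rightarrow> real) \<Rightarrow> (nat \<Rightarrow> real)) \<Rightarrow> (nat \<Rightarrow> real) \<Rightarrow> (nat \<Rightarrow> real) \<Rightarrow> (nat \<Rightarrow> real)" where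
  "alg_inv n mul one x = (SOME y. supp_n n y \<and> mul x y = one \<and> mul y x = one)"

definition ball_n :: "nat \<Rightarrow> (nat \<Rightarrow> real) \<Rightarrow> real \<Rightarrow> (nat \<Rightarrow> real) set" where
  "ball_n n c r = {y. supp_n n y \<and> sqrt (\<Sum>i<n. (y i - c i)^2) < r}"

definition has_partial :: "((nat \<Rightarrow> real) \<Rightarrow> real) \<Rightarrow> nat \<Rightarrow> (nat \<Rightarrow> real) \<Rightarrow> real \<Rightarrow> bool" where
  "has_partial f k y D \<longleftrightarrow> ((\<lambda>h. f (y(k := y k + h))) has_real_derivative D) (at 0)"

text \<open>L is uncurling: symmetric, and on some open ball of units centered at the identity
  the 1-form (s^-1)^T L ds = sum_j f_j dx_j with f_j(s) = sum_i (s^-1)_i L_ij is closed,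
  i.e. d f_j / d x_k = d f_k / d x_j for all j, k.\<close>
definition uncurling_metric :: "nat \<Rightarrow> ((nat \<Rightarrow> real) \<Rightarrow> (nat \<Rightarrow> real) \<Rightarrow> (nat \<Rightarrow> real)) \<Rightarrow> (nat \<Rightarrow> real) \<Rightarrow> (nat \<Rightarrow> nat \<Rightarrow> real) \<Rightarrow> bool" where
  "uncurling_metric n mul one L \<longleftrightarrow>
     (\<forall>i<n. \<forall>j<n. L i j = L j i) \<and>
     (\<exists>r>0. (\<forall>y\<in>ball_n n one r. alg_unit n mul one y) \<and>
       (\<forall>y\<in>ball_n n one r. \<forall>j<n. \<forall>k<n. \<exists>D.
          has_partial (\<lambda>z. \<Sum>i<n. alg_inv n mul one z i * L i j) k y D \<and>
          has_partial (\<lambda>z. \<Sum>i<n. alg_inv n mul one z i * L i k) j y D))"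

definition anti_rotor :: "nat \<Rightarrow> ((nat \<Rightarrow> real) \<Rightarrow> (nat \<Rightarrow> real) \<Rightarrow> (nat \<Rightarrow> real)) \<Rightarrow> (nat \<Rightarrow> real) \<Rightarrow> (nat \<Rightarrow> nat \<Rightarrow> real) set" where
  "anti_rotor n mul one = {L. uncurling_metric n mul one L}"

end

theory Submission
  imports Defs "HOL-Computational_Algebra.Formal_Power_Series"
begin

(* Identifying s = (x_1,...,x_n) with the power series x_1 + x_2 X + ... + x_n X^(n-1), the
   algebra T_n is R[[X]] modulo X^n, and s^-1 is the truncated inverse series. Moving x_(k+1)
   perturbs s by h X^k, so the partial derivative of s^-1 along x_(k+1) is -X^k s^-2, and the
   form (s^-1)^T L ds is closed iff sum_i L_ij (X^k s^-2)_i is symmetric in j and k. For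
   L = t J_n the entry L_ij depends only on i + j and vanishes for i + j >= n, which makes
   this sum a function of j + k. Conversely, for k = 0 closedness says that the coefficients
   of s^-2 are orthogonal to a_m = L_mj - L_(m+j)0 (read as 0 beyond the matrix). Near the
   identity s^-2 can be 1 + 2e X^p + e^2 X^(2p) (take s the inverse of 1 + e X^p); a
   polynomial in e vanishing near 0 has zero coefficients, so all a_m vanish and L is the
   Hankel matrix t J_n. *)

unbundle no vec_syntax
notation fps_nth (infixl \<open>$\<close> 75)

lemma fps_cutoff_mult_cutoff_left [simp]: "fps_cutoff n (fps_cutoff n f * g) = fps_cutoff n (f * g)"
  by (simp add: fps_eq_iff fps_cutoff_left_mult_nth)

lemma fps_cutoff_mult_cutoff_right [simp]: "fps_cutoff n (f * fps_cutoff n g) = fps_cutoff n (f * g)"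
  by (simp add: fps_eq_iff fps_cutoff_right_mult_nth)

lemma fps_cutoff_mult_cong:
  assumes "fps_cutoff n f = fps_cutoff n f'" "fps_cutoff n g = fps_cutoff n g'"
  shows "fps_cutoff n (f * g) = fps_cutoff n (f' * g')"
  using assms unfolding fps_cutoff_eq_fps_cutoff_iff fps_mult_nth by (auto intro!: sum.cong)

lemma fps_cutoff_inverse_cong:
  fixes f g :: "'a::field fps"
  assumes "fps_cutoff n f = fps_cutoff n g" "f $ 0 \<noteq> 0"
  shows "fps_cutoff n (inverse f) = fps_cutoff n (inverse g)"
proof (cases "n = 0")
  case False
  then have "g $ 0 \<noteq> 0"
    using assms by (auto simp: fps_cutoff_eq_fps_cutoff_iff)
  have "fps_cutoff n (inverse f * g * inverse g) = fps_cutoff n (inverse f * f * inverse g)"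
    using assms(1) by (intro fps_cutoff_mult_cong) auto
  then show ?thesis
    using assms(2) \<open>g $ 0 \<noteq> 0\<close> by (simp add: mult.assoc inverse_mult_eq_1' inverse_mult_eq_1)
qed simp

lemma fps_cutoff_inverse_fps_cutoff_inverse:
  fixes u :: "'a::field fps"
  assumes "u $ 0 \<noteq> 0"
  shows "fps_cutoff n (inverse (fps_cutoff n (inverse u))) = fps_cutoff n u"
proof (cases "n = 0")
  case False
  then show ?thesis
    using fps_cutoff_inverse_cong[of n "fps_cutoff n (inverse u)" "inverse u"] assms
    by (simp add: fps_eq_iff)
qed simp

lemma isCont_fps_inverse_nth:
  fixes f :: "'a::t2_space \<Rightarrow> 'b::real_normed_field fps"
  assumes "\<And>i. isCont (\<lambda>h. f h $ i) x" "f x $ 0 \<noteq> 0"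
  shows "isCont (\<lambda>h. inverse (f h) $ i) x"
  unfolding fps_inverse_def fps_nth_Abs_fps
proof (induction i rule: less_induct)
  case (less i)
  show ?case
  proof (cases i)
    case 0
    then show ?thesis using assms by (auto intro!: continuous_intros)
  next
    case (Suc m)
    then show ?thesis using assms less.IH by (auto intro!: continuous_intros)
  qed
qed

lemma has_field_derivative_fps_inverse_nth:
  fixes P :: "'a::real_normed_field fps"
  assumes "P $ 0 \<noteq> 0"
  shows "((\<lambda>h. inverse (P + fps_const h * fps_X ^ k) $ i)
           has_field_derivative - ((fps_X ^ k * inverse P ^ 2) $ i)) (at 0)"
proof -
  define Ph where "Ph h = P + fps_const h * fps_X ^ k" for h
  define G where "G h = - ((inverse (Ph h) * (fps_X ^ k * inverse P)) $ i)" for h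
  have Ph_nth: "Ph h $ j = P $ j + (if j = k then 1 else 0) * h" for h j
    by (simp add: Ph_def)
  have unit: "\<forall>\<^sub>F h in nhds 0. Ph h $ 0 \<noteq> 0"
    unfolding eventually_nhds_metric using assms
    by (intro exI[of _ "norm (P $ 0)"]) (auto simp: Ph_nth dist_norm add_eq_0_iff)
  have quotient: "(inverse (Ph h) $ i - inverse (Ph 0) $ i) / h = G h"
    if "h \<noteq> 0" "Ph h $ 0 \<noteq> 0" for h
  proof -
    have "inverse (Ph h) - inverse P = inverse (Ph h) * (P * inverse P) - (inverse (Ph h) * Ph h) * inverse P"
      using assms that(2) by (simp add: inverse_mult_eq_1 inverse_mult_eq_1')
    also have "\<dots> = - (fps_const h * (inverse (Ph h) * (fps_X ^ k * inverse P)))"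
      by (simp add: Ph_def algebra_simps)
    finally have "inverse (Ph h) $ i - inverse P $ i = h * G h"
      unfolding G_def by (metis fps_sub_nth fps_neg_nth fps_mult_left_const_nth mult_minus_right)
    then show ?thesis
      using that(1) by (simp add: Ph_def)
  qed
  have "isCont G 0"
    unfolding G_def fps_mult_nth
    by (intro continuous_intros isCont_fps_inverse_nth) (use assms in \<open>simp_all add: Ph_nth\<close>)
  moreover have "\<forall>\<^sub>F h in at 0. G h = (inverse (Ph h) $ i - inverse (Ph 0) $ i) / h"
    using unit unfolding eventually_at_filter by (elim eventually_mono) (simp add: quotient)
  ultimately have "((\<lambda>h. (inverse (Ph h) $ i - inverse (Ph 0) $ i) / h) \<longlongrightarrow> G 0) (at 0)"
    unfolding isCont_def by (rule Lim_transform_eventually)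
  moreover have "G 0 = - ((fps_X ^ k * inverse P ^ 2) $ i)"
    by (simp add: G_def Ph_def power2_eq_square mult_ac)
  ultimately show ?thesis
    by (simp add: has_field_derivative_iff Ph_def)
qed

lemma sum_fps_X_power_mult_nth:
  "(\<Sum>i<n. (fps_X ^ k * w) $ i * c i) = (\<Sum>m<n. w $ m * (if m + k < n then c (m + k) else 0))"
proof -
  have "(\<Sum>i<n. (fps_X ^ k * w) $ i * c i) = (\<Sum>i\<in>{k..<n}. w $ (i - k) * c i)"
    by (rule sum.mono_neutral_cong_right) (auto simp: fps_X_power_mult_nth)
  also have "\<dots> = (\<Sum>m\<in>{0..<n - k}. w $ m * c (m + k))"
    using sum.shift_bounds_nat_ivl[of "\<lambda>i. w $ (i - k) * c i" 0 k "n - k"] by (cases "k \<le> n") simp_all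
  also have "\<dots> = (\<Sum>m<n. w $ m * (if m + k < n then c (m + k) else 0))"
    by (rule sum.mono_neutral_cong_left) auto
  finally show ?thesis .
qed

lemma binomial_square_fps_nth:
  fixes e :: "'a::comm_ring_1"
  shows "((1 + fps_const e * fps_X ^ p) ^ 2) $ i
           = (if i = 0 then 1 else 0) + 2 * e * (if i = p then 1 else 0) + e ^ 2 * (if i = 2 * p then 1 else 0)"
proof -
  define c where "c = fps_const e * fps_X ^ p"
  have "c ^ 2 = fps_const (e ^ 2) * fps_X ^ (2 * p)"
    by (simp add: c_def power_mult_distrib fps_const_power power_mult mult.commute[of 2])
  then have c2: "(c ^ 2) $ i = e ^ 2 * (if i = 2 * p then 1 else 0)"
    by simp
  have c1: "(2 * c) $ i = 2 * e * (if i = p then 1 else 0)"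
    by (simp add: c_def numeral_fps_const)
  show ?thesis
    unfolding c_def[symmetric] power2_sum fps_add_nth c2 mult_1_right c1 by simp
qed

lemma sum_binomial_square_fps_nth:
  fixes a :: "nat \<Rightarrow> 'a::comm_ring_1"
  assumes "p < n"
  shows "(\<Sum>m<n. ((1 + fps_const e * fps_X ^ p) ^ 2) $ m * a m)
           = a 0 + 2 * e * a p + e ^ 2 * (if 2 * p < n then a (2 * p) else 0)"
proof -
  have "(\<Sum>m<n. ((1 + fps_const e * fps_X ^ p) ^ 2) $ m * a m)
      = (\<Sum>m<n. if m = 0 then a m else 0) + 2 * e * (\<Sum>m<n. if m = p then a m else 0)
        + e ^ 2 * (\<Sum>m<n. if m = 2 * p then a m else 0)"
    unfolding binomial_square_fps_nth distrib_right sum.distrib sum_distrib_left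
    by (intro arg_cong2[where f = "(+)"] sum.cong) auto
  then show ?thesis
    using assms by simp
qed

lemma eq_0_if_orthogonal_to_binomial_squares:
  fixes a :: "nat \<Rightarrow> real"
  assumes orth: "\<And>p. p < n \<Longrightarrow>
      \<forall>\<^sub>F e in nhds 0. (\<Sum>m<n. ((1 + fps_const e * fps_X ^ p) ^ 2) $ m * a m) = 0"
    and "p < n"
  shows "a p = 0"
proof -
  define b where "b = (if 2 * p < n then a (2 * p) else 0)"
  note expand = sum_binomial_square_fps_nth[OF assms(2), of _ a, folded b_def]
  have "a 0 = 0"
    using eventually_nhds_x_imp_x[OF orth[OF assms(2)]] expand[of 0] by simp
  then obtain \<delta> :: real where "\<delta> > 0"
    and \<delta>: "\<And>e. dist e 0 < \<delta> \<Longrightarrow> 2 * e * a p + e ^ 2 * b = 0"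
    using orth[OF assms(2)] unfolding eventually_nhds_metric by (auto simp: expand)
  have "\<delta> * a p + (\<delta> / 2) ^ 2 * b = 0" "- (\<delta> * a p) + (\<delta> / 2) ^ 2 * b = 0"
    using \<delta>[of "\<delta> / 2"] \<delta>[of "- \<delta> / 2"] \<open>\<delta> > 0\<close> by (simp_all add: dist_real_def)
  then show ?thesis
    using \<open>\<delta> > 0\<close> by simp
qed

lemma Tmul_eq_fps_cutoff: "Tmul n x y = fps_nth (fps_cutoff n (Abs_fps x * Abs_fps y))"
  by (auto simp: Tmul_def fps_mult_nth atLeast0AtMost)

lemma Tone_eq_fps_cutoff: "Tone n = fps_nth (fps_cutoff n 1)"
  by (auto simp: Tone_def)

lemma Abs_fps_supp_n: "supp_n n x \<Longrightarrow> Abs_fps x = fps_cutoff n (Abs_fps x)"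
  by (auto simp: supp_n_def fps_eq_iff)

lemma Tmul_inverse:
  assumes "supp_n n y" "y 0 \<noteq> 0"
  shows "alg_unit n (Tmul n) (Tone n) y"
    and "alg_inv n (Tmul n) (Tone n) y = fps_nth (fps_cutoff n (inverse (Abs_fps y)))"
proof -
  define Y where "Y = Abs_fps y"
  define v where "v = fps_nth (fps_cutoff n (inverse Y))"
  have Y0: "Y $ 0 \<noteq> 0"
    using assms(2) by (simp add: Y_def)
  have v_fps: "Abs_fps v = fps_cutoff n (inverse Y)"
    by (simp add: v_def fps_nth_inverse)
  have "Tmul n y v = Tone n" "Tmul n v y = Tone n"
    using Y0 by (simp_all add: Tmul_eq_fps_cutoff Tone_eq_fps_cutoff v_fps
        inverse_mult_eq_1 inverse_mult_eq_1' flip: Y_def)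
  moreover have "supp_n n v"
    by (simp add: v_def supp_n_def)
  ultimately show unit: "alg_unit n (Tmul n) (Tone n) y"
    unfolding alg_unit_def by blast
  have "z = v" if "supp_n n z" "Tmul n z y = Tone n" for z
  proof -
    have "fps_cutoff n (Abs_fps z * Y) = fps_cutoff n 1"
      using that(2) by (simp add: Tmul_eq_fps_cutoff Tone_eq_fps_cutoff fun_eq_iff fps_eq_iff Y_def)
    then have "fps_cutoff n (Abs_fps z * Y * inverse Y) = fps_cutoff n (inverse Y)"
      using fps_cutoff_mult_cong[of n "Abs_fps z * Y" 1 "inverse Y" "inverse Y"] by simp
    then have "Abs_fps z = Abs_fps v"
      using Y0 Abs_fps_supp_n[OF that(1)] by (simp add: v_fps mult.assoc inverse_mult_eq_1')
    then show ?thesis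
      by (metis fps_nth_Abs_fps ext)
  qed
  then show "alg_inv n (Tmul n) (Tone n) y = v"
    using unit unfolding alg_unit_def alg_inv_def by (metis (mono_tags, lifting) someI_ex)
qed

lemma Tmul_unit_nonzero:
  assumes "0 < n" "alg_unit n (Tmul n) (Tone n) y"
  shows "y 0 \<noteq> 0"
proof -
  obtain z where "Tmul n y z = Tone n"
    using assms(2) unfolding alg_unit_def by blast
  from fun_cong[OF this, of 0] have "y 0 * z 0 = 1"
    using assms(1) by (simp add: Tmul_def Tone_def)
  then show ?thesis
    by auto
qed

lemma has_partial_Tmul_inverse_form:
  assumes "supp_n n y" "y 0 \<noteq> 0" "k < n"
  shows "has_partial (\<lambda>z. \<Sum>i<n. alg_inv n (Tmul n) (Tone n) z i * L i j) k y
           (- (\<Sum>m<n. (inverse (Abs_fps y) ^ 2) $ m * (if m + k < n then L (m + k) j else 0)))"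
proof -
  define P where "P = Abs_fps y"
  have shift: "Abs_fps (y(k := y k + h)) = P + fps_const h * fps_X ^ k" for h
    by (simp add: P_def fps_eq_iff)
  have "\<forall>\<^sub>F h in nhds 0. (y(k := y k + h)) 0 \<noteq> 0"
    unfolding eventually_nhds_metric using assms(2)
    by (intro exI[of _ "\<bar>y 0\<bar>"]) (auto simp: dist_real_def)
  moreover have "supp_n n (y(k := y k + h))" for h
    using assms(1,3) by (simp add: supp_n_def)
  ultimately have "\<forall>\<^sub>F h in nhds 0.
      (\<Sum>i<n. alg_inv n (Tmul n) (Tone n) (y(k := y k + h)) i * L i j)
      = (\<Sum>i<n. inverse (P + fps_const h * fps_X ^ k) $ i * L i j)"
    by (elim eventually_mono) (simp add: Tmul_inverse(2) shift)
  moreover have "((\<lambda>h. \<Sum>i<n. inverse (P + fps_const h * fps_X ^ k) $ i * L i j) has_real_derivative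
      (\<Sum>i<n. - ((fps_X ^ k * inverse P ^ 2) $ i) * L i j)) (at 0)"
    using assms(2) by (intro DERIV_sum DERIV_cmult_right has_field_derivative_fps_inverse_nth) (simp add: P_def)
  ultimately show ?thesis
    unfolding has_partial_def
    by (subst DERIV_cong_ev) (simp_all add: sum_fps_X_power_mult_nth sum_negf P_def)
qed

lemma Tmul_inverse_form_partials_eq:
  assumes "supp_n n y" "y 0 \<noteq> 0" "j < n" "k < n"
    and "has_partial (\<lambda>z. \<Sum>i<n. alg_inv n (Tmul n) (Tone n) z i * L i j) k y D"
    and "has_partial (\<lambda>z. \<Sum>i<n. alg_inv n (Tmul n) (Tone n) z i * L i k) j y D"
  shows "(\<Sum>m<n. (inverse (Abs_fps y) ^ 2) $ m * (if m + k < n then L (m + k) j else 0))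
       = (\<Sum>m<n. (inverse (Abs_fps y) ^ 2) $ m * (if m + j < n then L (m + j) k else 0))"
  using DERIV_unique[OF assms(5)[unfolded has_partial_def]
      has_partial_Tmul_inverse_form[OF assms(1,2,4), of L j, unfolded has_partial_def]]
    DERIV_unique[OF assms(6)[unfolded has_partial_def]
      has_partial_Tmul_inverse_form[OF assms(1,2,3), of L k, unfolded has_partial_def]]
  by simp

lemma ball_n_coordinate:
  assumes "y \<in> ball_n n c r" "i < n"
  shows "\<bar>y i - c i\<bar> < r"
proof -
  have "(y i - c i) ^ 2 \<le> (\<Sum>l<n. (y l - c l) ^ 2)"
    using assms(2) by (intro member_le_sum) auto
  then have "\<bar>y i - c i\<bar> \<le> sqrt (\<Sum>l<n. (y l - c l) ^ 2)"
    using real_sqrt_le_mono by fastforce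
  then show ?thesis
    using assms(1) by (simp add: ball_n_def)
qed

lemma eventually_fps_inverse_binomial_in_ball_n:
  assumes "0 < r"
  shows "\<forall>\<^sub>F e in nhds 0.
           fps_nth (fps_cutoff n (inverse (1 + fps_const e * fps_X ^ p))) \<in> ball_n n (Tone n) r"
proof -
  define u where "u e = 1 + fps_const e * fps_X ^ p" for e :: real
  define d where "d e = sqrt (\<Sum>i<n. (inverse (u e) $ i - Tone n i) ^ 2)" for e
  have "isCont d 0"
    unfolding d_def by (intro continuous_intros isCont_fps_inverse_nth) (simp_all add: u_def)
  moreover have "d 0 = 0"
    by (simp add: d_def u_def Tone_def)
  ultimately have "\<forall>\<^sub>F e in nhds 0. d e < r"
    using assms tendsto_at_iff_tendsto_nhds[of d 0] by (auto simp: isCont_def intro: order_tendstoD)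
  then show ?thesis
    by (elim eventually_mono) (simp add: ball_n_def supp_n_def d_def u_def)
qed

lemma toep_exch_entry:
  assumes "i < n" "j < n"
  shows "mat_mult n (toep n t) (exch n) i j = (if i + j < n then t (n - 1 - (i + j)) else 0)"
proof -
  have "mat_mult n (toep n t) (exch n) i j = (\<Sum>k<n. if k = n - 1 - j then toep n t i k else 0)"
    unfolding mat_mult_def exch_def using assms by (intro sum.cong) auto
  also have "\<dots> = toep n t i (n - 1 - j)"
    using assms by simp
  finally show ?thesis
    using assms by (auto simp: toep_def add.commute)
qed

lemma uncurling_metric_toep_exch:
  assumes "0 < n"
  shows "uncurling_metric n (Tmul n) (Tone n) (mat_mult n (toep n t) (exch n))"
proof -
  define L where "L = mat_mult n (toep n t) (exch n)"
  have L: "L i j = (if i + j < n then t (n - 1 - (i + j)) else 0)" if "i < n" "j < n" for i j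
    using toep_exch_entry[OF that] by (simp add: L_def)
  have unit: "supp_n n y \<and> y 0 \<noteq> 0" if "y \<in> ball_n n (Tone n) 1" for y
    using ball_n_coordinate[OF that assms] that assms by (auto simp: ball_n_def Tone_def)
  have "\<exists>D. has_partial (\<lambda>z. \<Sum>i<n. alg_inv n (Tmul n) (Tone n) z i * L i j) k y D \<and>
            has_partial (\<lambda>z. \<Sum>i<n. alg_inv n (Tmul n) (Tone n) z i * L i k) j y D"
    if "y \<in> ball_n n (Tone n) 1" "j < n" "k < n" for y j k
  proof -
    have "(if m + k < n then L (m + k) j else 0) = (if m + j < n then L (m + j) k else 0)" for m
      using that(2,3) by (simp add: L add_ac)
    then show ?thesis
      using has_partial_Tmul_inverse_form[of n y k L j] has_partial_Tmul_inverse_form[of n y j L k]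
        unit[OF that(1)] that(2,3) by auto
  qed
  moreover have "\<forall>i<n. \<forall>j<n. L i j = L j i"
    by (simp add: L add.commute)
  ultimately show ?thesis
    unfolding uncurling_metric_def L_def[symmetric]
    using unit Tmul_inverse(1) by (intro conjI exI[of _ 1]) auto
qed

lemma uncurling_metric_Tmul_hankel:
  assumes "0 < n" "uncurling_metric n (Tmul n) (Tone n) L" "i < n" "j < n"
  shows "L i j = (if i + j < n then L (i + j) 0 else 0)"
proof -
  obtain r where "r > 0" and units: "\<forall>y\<in>ball_n n (Tone n) r. alg_unit n (Tmul n) (Tone n) y"
    and closed: "\<forall>y\<in>ball_n n (Tone n) r. \<forall>j<n. \<forall>k<n. \<exists>D.
          has_partial (\<lambda>z. \<Sum>i<n. alg_inv n (Tmul n) (Tone n) z i * L i j) k y D \<and>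
          has_partial (\<lambda>z. \<Sum>i<n. alg_inv n (Tmul n) (Tone n) z i * L i k) j y D"
    using assms(2) unfolding uncurling_metric_def by blast
  define a where "a m = L m j - (if m + j < n then L (m + j) 0 else 0)" for m
  have orth: "(\<Sum>m<n. (inverse (Abs_fps y) ^ 2) $ m * a m) = 0" if ball: "y \<in> ball_n n (Tone n) r" for y
  proof -
    have y: "supp_n n y" "y 0 \<noteq> 0"
      using ball units Tmul_unit_nonzero[OF assms(1)] by (auto simp: ball_n_def)
    obtain D where
      "has_partial (\<lambda>z. \<Sum>i<n. alg_inv n (Tmul n) (Tone n) z i * L i j) 0 y D"
      "has_partial (\<lambda>z. \<Sum>i<n. alg_inv n (Tmul n) (Tone n) z i * L i 0) j y D"
      using closed[rule_format, OF ball assms(4,1)] by blast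
    from Tmul_inverse_form_partials_eq[OF y assms(4,1) this]
    have "(\<Sum>m<n. (inverse (Abs_fps y) ^ 2) $ m * (if m + 0 < n then L (m + 0) j else 0))
        = (\<Sum>m<n. (inverse (Abs_fps y) ^ 2) $ m * (if m + j < n then L (m + j) 0 else 0))" .
    then show ?thesis
      by (simp add: a_def right_diff_distrib sum_subtractf)
  qed
  have "\<forall>\<^sub>F e in nhds 0. (\<Sum>m<n. ((1 + fps_const e * fps_X ^ p) ^ 2) $ m * a m) = 0" for p
    using eventually_fps_inverse_binomial_in_ball_n[OF \<open>r > 0\<close>, of n p]
  proof (elim eventually_mono)
    fix e :: real
    define u where "u = 1 + fps_const e * fps_X ^ p"
    assume "fps_nth (fps_cutoff n (inverse (1 + fps_const e * fps_X ^ p))) \<in> ball_n n (Tone n) r"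
    then have y: "fps_nth (fps_cutoff n (inverse u)) \<in> ball_n n (Tone n) r"
      by (simp add: u_def)
    then have "u $ 0 \<noteq> 0"
      using Tmul_unit_nonzero[OF assms(1) units[rule_format, OF y]] assms(1) by simp
    then have "fps_cutoff n (inverse (fps_cutoff n (inverse u)) ^ 2) = fps_cutoff n (u ^ 2)"
      unfolding power2_eq_square by (intro fps_cutoff_mult_cong fps_cutoff_inverse_fps_cutoff_inverse)
    then have "(\<Sum>m<n. (u ^ 2) $ m * a m)
             = (\<Sum>m<n. (inverse (Abs_fps (fps_nth (fps_cutoff n (inverse u)))) ^ 2) $ m * a m)"
      unfolding fps_cutoff_eq_fps_cutoff_iff by (intro sum.cong) (simp_all add: fps_nth_inverse)
    then show "(\<Sum>m<n. ((1 + fps_const e * fps_X ^ p) ^ 2) $ m * a m) = 0"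
      using orth[OF y] by (simp add: u_def)
  qed
  then have "a i = 0"
    by (rule eq_0_if_orthogonal_to_binomial_squares[OF _ assms(3)])
  then show ?thesis
    using assms(3) by (simp add: a_def)
qed

theorem theorem10p4:
  fixes n :: nat
  assumes "n \<ge> 1"
  shows "(\<forall>t. supp_n n t \<longrightarrow>
            mat_mult n (toep n t) (exch n) \<in> anti_rotor n (Tmul n) (Tone n)) \<and>
         (\<forall>L \<in> anti_rotor n (Tmul n) (Tone n). \<exists>t. supp_n n t \<and>
            (\<forall>i<n. \<forall>j<n. L i j = mat_mult n (toep n t) (exch n) i j))"
proof (intro conjI allI impI ballI)
  have n: "0 < n"
    using assms by simp
  show "mat_mult n (toep n t) (exch n) \<in> anti_rotor n (Tmul n) (Tone n)" for t
    using uncurling_metric_toep_exch[OF n] by (simp add: anti_rotor_def)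
  fix L
  assume "L \<in> anti_rotor n (Tmul n) (Tone n)"
  then have hankel: "L i j = (if i + j < n then L (i + j) 0 else 0)" if "i < n" "j < n" for i j
    using uncurling_metric_Tmul_hankel[OF n _ that] by (simp add: anti_rotor_def)
  define t where "t s = (if s < n then L (n - 1 - s) 0 else 0)" for s
  have "supp_n n t"
    by (simp add: supp_n_def t_def)
  moreover have "L i j = mat_mult n (toep n t) (exch n) i j" if "i < n" "j < n" for i j
    using hankel[OF that] by (simp add: toep_exch_entry[OF that] t_def)
  ultimately show "\<exists>t. supp_n n t \<and> (\<forall>i<n. \<forall>j<n. L i j = mat_mult n (toep n t) (exch n) i j)"
    by blast
qed

end
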